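(* Suppose there is $D>0$ such that for all $\alpha\in(0,\alpha_{\max})$ $$\sum_{\lambda_i\le\alpha}|\langle x^\dagger,u_i\rangle|^2\le D\sum_{\lambda_i\ge\alpha}\frac{\alpha}{\lambda_i}|\langle x^\dagger,u_i\rangle|^2.$$ Then there is a constant $C$ depending only on $D$ (e.g. $C=\sqrt{8(D+1)}$) such that for all $\alpha\in(0,\alpha_{\max})$ $$\|x_\alpha-x^\dagger\|\le C\,\psi_{SL}(\alpha,x^\dagger).$$
   Context: Let $X,Y$ be real Hilbert spaces and $A:X\to Y$ a compact linear operator with singular system $(\sigma_i,u_i,v_i)_i$, $\sigma_i>0$; put $\lambda_i=\sigma_i^2$. Let $x^\dagger\in N(A)^\perp$, $y=Ax^\dagger$, $x_\alpha=(A^*A+\alpha I)^{-1}A^*y$, $\alpha_{\max}>0$ fixed, and $\psi_{SL}(\alpha,x^\dagger):=\Big(\sum_i\frac{\alpha\lambda_i^2}{(\lambda_i+\alpha)^3}|\langle x^\dagger,u_i\rangle|^2\Big)^{1/2}$. *)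

theory Defs
  imports "HOL-Analysis.Analysis"
begin

text \<open>Real Hilbert spaces are modelled by types of class real_inner and complete_space.\<close>

definition is_adjoint :: "('a::real_inner \<Rightarrow> 'b::real_inner) \<Rightarrow> ('b \<Rightarrow> 'a) \<Rightarrow> bool" where
  "is_adjoint A As \<longleftrightarrow> (\<forall>x y. inner (A x) y = inner x (As y))"

definition compact_operator :: "('a::real_normed_vector \<Rightarrow> 'b::real_normed_vector) \<Rightarrow> bool" where
  "compact_operator A \<longleftrightarrow> bounded_linear A \<and> compact (closure (A ` ball 0 1))"

definition orthonormal_on :: "nat set \<Rightarrow> (nat \<Rightarrow> 'a::real_inner) \<Rightarrow> bool" where
  "orthonormal_on I e \<longleftrightarrow> (\<forall>i\<in>I. \<forall>j\<in>I. inner (e i) (e j) = (if i = j then 1 else 0))"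

definition singular_system ::
  "('a::real_inner \<Rightarrow> 'b::real_inner) \<Rightarrow> ('b \<Rightarrow> 'a) \<Rightarrow> nat set \<Rightarrow> (nat \<Rightarrow> real)
    \<Rightarrow> (nat \<Rightarrow> 'a) \<Rightarrow> (nat \<Rightarrow> 'b) \<Rightarrow> bool" where
  "singular_system A As I \<sigma> u v \<longleftrightarrow>
     (\<forall>i\<in>I. \<sigma> i > 0) \<and> orthonormal_on I u \<and> orthonormal_on I v \<and>
     (\<forall>i\<in>I. A (u i) = \<sigma> i *\<^sub>R v i \<and> As (v i) = \<sigma> i *\<^sub>R u i) \<and>
     (\<forall>x. ((\<lambda>i. (\<sigma> i * inner x (u i)) *\<^sub>R v i) has_sum A x) I)"

definition tikhonov :: "('a::real_inner \<Rightarrow> 'b::real_inner) \<Rightarrow> ('b \<Rightarrow> 'a) \<Rightarrow> 'b \<Rightarrow> real \<Rightarrow> 'a" where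
  "tikhonov A As y \<alpha> = (THE x. As (A x) + \<alpha> *\<^sub>R x = As y)"

definition psi_SL :: "nat set \<Rightarrow> (nat \<Rightarrow> real) \<Rightarrow> (nat \<Rightarrow> 'a::real_inner) \<Rightarrow> real \<Rightarrow> 'a \<Rightarrow> real" where
  "psi_SL I \<sigma> u \<alpha> xd =
     sqrt (\<Sum>\<^sub>\<infinity>i\<in>I. \<alpha> * (\<sigma> i)\<^sup>2 ^ 2 / ((\<sigma> i)\<^sup>2 + \<alpha>) ^ 3 * \<bar>inner xd (u i)\<bar>\<^sup>2)"

end

theory Submission
  imports Defs
begin

(* In the singular basis the Tikhonov error x_alpha - x' has coefficients
   -alpha/(lambda_i + alpha) <x', u_i>, so its squared norm is
   sum_i (alpha/(lambda_i + alpha))^2 c_i with c_i = |<x', u_i>|^2.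
   Where lambda_i >= alpha this filter factor is at most 8 times the weight
   alpha lambda_i^2/(lambda_i + alpha)^3 of psi_SL^2.  Where lambda_i < alpha it is at most 1,
   and the hypothesis bounds that low-frequency mass by D sum_{lambda_i >= alpha} (alpha/lambda_i) c_i,
   whose weight is again at most 8 times the psi_SL weight.  Hence
   ||x_alpha - x'||^2 <= 8 (D + 1) psi_SL(alpha, x')^2. *)

lemma summable_on_Cauchy_tails:
  fixes f :: "'i \<Rightarrow> 'b::{real_normed_vector,complete_space}"
  assumes tails: "\<And>e. e > 0 \<Longrightarrow>
    \<exists>F0. finite F0 \<and> F0 \<subseteq> I \<and> (\<forall>F. finite F \<and> F \<subseteq> I - F0 \<longrightarrow> norm (sum f F) < e)"
  shows "f summable_on I"
proof -
  have Cauchy: "cauchy_filter (filtermap (sum f) (finite_subsets_at_top I))"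
    unfolding cauchy_filter_metric_filtermap
  proof (intro allI impI)
    fix e :: real
    assume "e > 0"
    then obtain F0 where F0: "finite F0" "F0 \<subseteq> I"
      and small: "\<And>F. finite F \<Longrightarrow> F \<subseteq> I - F0 \<Longrightarrow> norm (sum f F) < e / 2"
      using tails[of "e / 2"] by auto
    define P where "P F \<longleftrightarrow> finite F \<and> F0 \<subseteq> F \<and> F \<subseteq> I" for F
    have "eventually P (finite_subsets_at_top I)"
      unfolding eventually_finite_subsets_at_top P_def using F0 by blast
    moreover have "dist (sum f F) (sum f F') < e" if "P F" "P F'" for F F'
    proof -
      have split: "sum f G = sum f F0 + sum f (G - F0)" if "P G" for G
        using that unfolding P_def by (simp add: sum.subset_diff[of F0 G] add.commute)
      have "dist (sum f F) (sum f F') = norm (sum f (F - F0) - sum f (F' - F0))"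
        by (simp add: dist_norm split[OF \<open>P F\<close>] split[OF \<open>P F'\<close>])
      also have "\<dots> \<le> norm (sum f (F - F0)) + norm (sum f (F' - F0))"
        by (rule norm_triangle_ineq4)
      also have "\<dots> < e / 2 + e / 2"
        using that unfolding P_def by (intro add_strict_mono small) auto
      finally show ?thesis by simp
    qed
    ultimately show "\<exists>P. eventually P (finite_subsets_at_top I) \<and>
        (\<forall>F F'. P F \<and> P F' \<longrightarrow> dist (sum f F) (sum f F') < e)"
      by blast
  qed
  have "\<exists>L. filtermap (sum f) (finite_subsets_at_top I) \<le> nhds L"
    by (rule cauchy_filter_complete_converges[OF Cauchy complete_UNIV]) (simp_all add: filtermap_bot_iff)
  then obtain L where "filtermap (sum f) (finite_subsets_at_top I) \<le> nhds L" ..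
  then show ?thesis
    unfolding summable_on_def has_sum_def filterlim_def by blast
qed

lemma has_sum_inner_left:
  assumes "(f has_sum x) I"
  shows "((\<lambda>i. inner (f i) z) has_sum inner x z) I"
  using has_sum_bounded_linear[OF bounded_linear_inner_left assms] by simp

lemma orthonormal_on_norm_sum_squared:
  assumes ON: "orthonormal_on I u" and "finite F" "F \<subseteq> I"
  shows "(norm (\<Sum>i\<in>F. a i *\<^sub>R u i))\<^sup>2 = (\<Sum>i\<in>F. (a i)\<^sup>2)"
proof -
  have "(norm (\<Sum>i\<in>F. a i *\<^sub>R u i))\<^sup>2 = (\<Sum>i\<in>F. \<Sum>j\<in>F. a i * a j * inner (u i) (u j))"
    unfolding power2_norm_eq_inner
    by (subst sum.swap) (simp add: inner_sum_left inner_sum_right sum_distrib_left mult_ac)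
  also have "\<dots> = (\<Sum>i\<in>F. \<Sum>j\<in>F. if j = i then a i * a i else 0)"
  proof (intro sum.cong refl)
    fix i j
    assume "i \<in> F" "j \<in> F"
    then have "inner (u i) (u j) = (if i = j then 1 else 0)"
      using ON \<open>F \<subseteq> I\<close> unfolding orthonormal_on_def by blast
    then show "a i * a j * inner (u i) (u j) = (if j = i then a i * a i else 0)"
      by auto
  qed
  also have "\<dots> = (\<Sum>i\<in>F. (a i)\<^sup>2)"
    using \<open>finite F\<close> by (simp add: power2_eq_square)
  finally show ?thesis .
qed

lemma orthonormal_on_summable_on_scaleR:
  fixes u :: "nat \<Rightarrow> 'a::{real_inner,complete_space}"
  assumes ON: "orthonormal_on I u" and sq: "(\<lambda>i. (a i)\<^sup>2) summable_on I"
  shows "(\<lambda>i. a i *\<^sub>R u i) summable_on I"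
proof (rule summable_on_Cauchy_tails)
  fix e :: real
  assume "e > 0"
  then obtain F0 where F0: "finite F0" "F0 \<subseteq> I"
    and close: "dist (\<Sum>i\<in>F0. (a i)\<^sup>2) (\<Sum>\<^sub>\<infinity>i\<in>I. (a i)\<^sup>2) \<le> e\<^sup>2 / 2"
    using infsum_finite_approximation[OF sq, of "e\<^sup>2 / 2"] by auto
  have "norm (\<Sum>i\<in>F. a i *\<^sub>R u i) < e" if F: "finite F" "F \<subseteq> I - F0" for F
  proof -
    have "(\<Sum>i\<in>F. (a i)\<^sup>2) + (\<Sum>i\<in>F0. (a i)\<^sup>2) = (\<Sum>i\<in>F \<union> F0. (a i)\<^sup>2)"
      using F F0 by (subst sum.union_disjoint) auto
    also have "\<dots> \<le> (\<Sum>\<^sub>\<infinity>i\<in>I. (a i)\<^sup>2)"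
      using F F0 by (intro finite_sum_le_infsum sq) auto
    finally have "(\<Sum>i\<in>F. (a i)\<^sup>2) + (\<Sum>i\<in>F0. (a i)\<^sup>2) \<le> (\<Sum>\<^sub>\<infinity>i\<in>I. (a i)\<^sup>2)" .
    then have "(\<Sum>i\<in>F. (a i)\<^sup>2) \<le> e\<^sup>2 / 2"
      using close abs_ge_minus_self[of "(\<Sum>i\<in>F0. (a i)\<^sup>2) - (\<Sum>\<^sub>\<infinity>i\<in>I. (a i)\<^sup>2)"]
      unfolding dist_real_def by linarith
    moreover have "(norm (\<Sum>i\<in>F. a i *\<^sub>R u i))\<^sup>2 = (\<Sum>i\<in>F. (a i)\<^sup>2)"
      by (rule orthonormal_on_norm_sum_squared[OF ON F(1)]) (use F in blast)
    moreover have "e\<^sup>2 / 2 < e\<^sup>2"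
      using \<open>e > 0\<close> by simp
    ultimately have "(norm (\<Sum>i\<in>F. a i *\<^sub>R u i))\<^sup>2 < e\<^sup>2"
      by linarith
    then show ?thesis
      using \<open>e > 0\<close> by (simp add: power2_less_imp_less)
  qed
  then show "\<exists>F0. finite F0 \<and> F0 \<subseteq> I \<and>
      (\<forall>F. finite F \<and> F \<subseteq> I - F0 \<longrightarrow> norm (\<Sum>i\<in>F. a i *\<^sub>R u i) < e)"
    using F0 by blast
qed

lemma orthonormal_on_has_sum_coefficient:
  assumes ON: "orthonormal_on I u" and x: "((\<lambda>i. a i *\<^sub>R u i) has_sum x) I" and "j \<in> I"
  shows "inner x (u j) = a j"
proof -
  have "((\<lambda>i. a i * inner (u i) (u j)) has_sum inner x (u j)) I"
    using has_sum_inner_left[OF x] by simp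
  moreover have "((\<lambda>i. a i * inner (u i) (u j)) has_sum a j) I"
  proof -
    have "((\<lambda>i. a i * inner (u i) (u j)) has_sum (\<Sum>i\<in>{j}. a i * inner (u i) (u j))) {j}"
      by (rule has_sum_finite) simp
    then have "((\<lambda>i. a i * inner (u i) (u j)) has_sum a j) {j}"
      using ON \<open>j \<in> I\<close> unfolding orthonormal_on_def by simp
    then show ?thesis
      by (rule has_sum_cong_neutral[THEN iffD1, rotated -1])
        (use ON \<open>j \<in> I\<close> in \<open>auto simp: orthonormal_on_def\<close>)
  qed
  ultimately show ?thesis
    by (rule has_sum_unique)
qed

lemma orthonormal_on_has_sum_norm_squared:
  assumes ON: "orthonormal_on I u" and x: "((\<lambda>i. a i *\<^sub>R u i) has_sum x) I"
  shows "((\<lambda>i. (a i)\<^sup>2) has_sum (norm x)\<^sup>2) I"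
proof -
  have "((\<lambda>i. a i * inner (u i) x) has_sum inner x x) I"
    using has_sum_inner_left[OF x] by simp
  moreover have "a i * inner (u i) x = (a i)\<^sup>2" if "i \<in> I" for i
    using orthonormal_on_has_sum_coefficient[OF ON x that]
    by (simp add: power2_eq_square inner_commute)
  ultimately have "((\<lambda>i. (a i)\<^sup>2) has_sum inner x x) I"
    by (rule has_sum_cong[THEN iffD1, rotated])
  then show ?thesis
    by (simp add: power2_norm_eq_inner)
qed

lemma orthonormal_on_Bessel:
  assumes ON: "orthonormal_on I u"
  shows "(\<lambda>i. (inner x (u i))\<^sup>2) summable_on I"
proof (rule nonneg_bdd_above_summable_on)
  show "bdd_above (sum (\<lambda>i. (inner x (u i))\<^sup>2) ` {F. F \<subseteq> I \<and> finite F})"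
  proof (rule bdd_aboveI2)
    fix F
    assume "F \<in> {F. F \<subseteq> I \<and> finite F}"
    then have F: "F \<subseteq> I" "finite F" by auto
    define s where "s = (\<Sum>i\<in>F. inner x (u i) *\<^sub>R u i)"
    have "0 \<le> (norm (x - s))\<^sup>2"
      by simp
    also have "\<dots> = (norm x)\<^sup>2 - 2 * inner x s + (norm s)\<^sup>2"
      by (simp add: power2_norm_eq_inner inner_diff_left inner_diff_right inner_commute)
    also have "inner x s = (\<Sum>i\<in>F. (inner x (u i))\<^sup>2)"
      unfolding s_def by (simp add: inner_sum_right power2_eq_square)
    also have "(norm s)\<^sup>2 = (\<Sum>i\<in>F. (inner x (u i))\<^sup>2)"
      unfolding s_def using orthonormal_on_norm_sum_squared[OF ON F(2,1)] .
    finally show "(\<Sum>i\<in>F. (inner x (u i))\<^sup>2) \<le> (norm x)\<^sup>2"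
      by simp
  qed
qed simp

lemma is_adjoint_inner_left:
  assumes "is_adjoint A As"
  shows "inner (As y) x = inner y (A x)"
  using assms unfolding is_adjoint_def by (metis inner_commute)

lemma singular_system_has_sum_inner_apply:
  assumes adj: "is_adjoint A As" and sys: "singular_system A As I \<sigma> u v"
  shows "((\<lambda>i. (\<sigma> i)\<^sup>2 * inner x (u i) * inner z (u i)) has_sum inner (A x) (A z)) I"
proof -
  have "((\<lambda>i. (\<sigma> i * inner x (u i)) *\<^sub>R v i) has_sum A x) I"
    using sys unfolding singular_system_def by blast
  then have "((\<lambda>i. inner ((\<sigma> i * inner x (u i)) *\<^sub>R v i) (A z)) has_sum inner (A x) (A z)) I"
    by (rule has_sum_inner_left)
  moreover have "inner ((\<sigma> i * inner x (u i)) *\<^sub>R v i) (A z) = (\<sigma> i)\<^sup>2 * inner x (u i) * inner z (u i)"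
    if "i \<in> I" for i
  proof -
    have "inner (v i) (A z) = inner (As (v i)) z"
      using is_adjoint_inner_left[OF adj] by simp
    also have "\<dots> = \<sigma> i * inner z (u i)"
      using sys that unfolding singular_system_def by (simp add: inner_commute)
    finally show ?thesis
      by (simp add: power2_eq_square)
  qed
  ultimately show ?thesis
    by (rule has_sum_cong[THEN iffD1, rotated])
qed

lemma singular_system_has_sum_expansion:
  fixes A :: "'a::{real_inner,complete_space} \<Rightarrow> 'b::real_inner"
  assumes "bounded_linear A" and sys: "singular_system A As I \<sigma> u v"
    and perp: "\<forall>z. A z = 0 \<longrightarrow> inner x z = 0"
  shows "((\<lambda>i. inner x (u i) *\<^sub>R u i) has_sum x) I"
proof -
  interpret A: bounded_linear A by fact
  have ON: "orthonormal_on I u"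
    using sys unfolding singular_system_def by blast
  obtain s where s: "((\<lambda>i. inner x (u i) *\<^sub>R u i) has_sum s) I"
    using orthonormal_on_summable_on_scaleR[OF ON orthonormal_on_Bessel[OF ON]]
    unfolding summable_on_def by blast
  have "((\<lambda>i. A (inner x (u i) *\<^sub>R u i)) has_sum A s) I"
    by (rule has_sum_bounded_linear[OF assms(1) s])
  moreover have "A (inner x (u i) *\<^sub>R u i) = (\<sigma> i * inner x (u i)) *\<^sub>R v i" if "i \<in> I" for i
    using sys that unfolding singular_system_def by (simp add: A.scaleR)
  ultimately have "((\<lambda>i. (\<sigma> i * inner x (u i)) *\<^sub>R v i) has_sum A s) I"
    by (rule has_sum_cong[THEN iffD1, rotated])
  moreover have "((\<lambda>i. (\<sigma> i * inner x (u i)) *\<^sub>R v i) has_sum A x) I"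
    using sys unfolding singular_system_def by blast
  ultimately have "A s = A x"
    by (rule has_sum_unique)
  then have "inner x (x - s) = 0"
    using perp by (simp add: A.diff)
  moreover have "inner s (x - s) = 0"
  proof -
    have "((\<lambda>i. inner x (u i) * inner (u i) (x - s)) has_sum inner s (x - s)) I"
      using has_sum_inner_left[OF s] by simp
    moreover have "((\<lambda>i. inner x (u i) * inner (u i) (x - s)) has_sum 0) I"
      using orthonormal_on_has_sum_coefficient[OF ON s]
      by (intro has_sum_0) (simp add: inner_diff_right inner_commute)
    ultimately show ?thesis
      by (rule has_sum_unique)
  qed
  ultimately have "inner (x - s) (x - s) = 0"
    by (simp add: inner_diff_left)
  then show ?thesis
    using s by simp
qed

lemma tikhonov_eqI:
  assumes "linear A" and adj: "is_adjoint A As" and "\<alpha> > 0"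
    and w: "As (A w) + \<alpha> *\<^sub>R w = As y"
  shows "tikhonov A As y \<alpha> = w"
  unfolding tikhonov_def
proof (rule the_equality)
  show "As (A w) + \<alpha> *\<^sub>R w = As y"
    by (fact w)
next
  fix x
  assume x: "As (A x) + \<alpha> *\<^sub>R x = As y"
  define d where "d = x - w"
  have "(As (A x) - As (A w)) + \<alpha> *\<^sub>R d = (As (A x) + \<alpha> *\<^sub>R x) - (As (A w) + \<alpha> *\<^sub>R w)"
    by (simp add: d_def algebra_simps)
  also have "\<dots> = 0"
    using x w by simp
  finally have "inner ((As (A x) - As (A w)) + \<alpha> *\<^sub>R d) d = 0"
    by simp
  moreover have "inner (As (A x) - As (A w)) d = inner (A x - A w) (A d)"
    by (simp add: inner_diff_left is_adjoint_inner_left[OF adj])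
  moreover have "A x - A w = A d"
    by (simp add: d_def linear_diff[OF \<open>linear A\<close>])
  ultimately have "inner (A d) (A d) + \<alpha> * inner d d = 0"
    by (simp add: inner_add_left)
  moreover have "0 \<le> inner (A d) (A d)" "0 \<le> \<alpha> * inner d d"
    using \<open>\<alpha> > 0\<close> by simp_all
  ultimately have "\<alpha> * inner d d = 0"
    by linarith
  then have "inner d d = 0"
    using \<open>\<alpha> > 0\<close> by simp
  then show "x = w"
    by (simp add: d_def)
qed

lemma singular_system_normal_equation:
  assumes adj: "is_adjoint A As" and sys: "singular_system A As I \<sigma> u v"
    and w: "((\<lambda>i. a i *\<^sub>R u i) has_sum w) I"
    and a: "\<And>i. i \<in> I \<Longrightarrow> ((\<sigma> i)\<^sup>2 + \<alpha>) * a i = (\<sigma> i)\<^sup>2 * inner x (u i)"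
  shows "As (A w) + \<alpha> *\<^sub>R w = As (A x)"
proof -
  have ON: "orthonormal_on I u"
    using sys unfolding singular_system_def by blast
  have "inner (As (A w) + \<alpha> *\<^sub>R w) z = inner (As (A x)) z" for z
  proof -
    have "((\<lambda>i. (\<sigma> i)\<^sup>2 * inner w (u i) * inner z (u i) + \<alpha> * (a i * inner (u i) z))
        has_sum inner (A w) (A z) + \<alpha> * inner w z) I"
      using has_sum_inner_left[OF w, of z]
      by (intro has_sum_add singular_system_has_sum_inner_apply[OF adj sys] has_sum_cmult_right) simp
    moreover have "(\<sigma> i)\<^sup>2 * inner w (u i) * inner z (u i) + \<alpha> * (a i * inner (u i) z)
        = (\<sigma> i)\<^sup>2 * inner x (u i) * inner z (u i)" if "i \<in> I" for i
    proof -
      have "(\<sigma> i)\<^sup>2 * inner w (u i) * inner z (u i) + \<alpha> * (a i * inner (u i) z)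
          = ((\<sigma> i)\<^sup>2 + \<alpha>) * a i * inner z (u i)"
        using orthonormal_on_has_sum_coefficient[OF ON w that]
        by (simp add: inner_commute algebra_simps)
      then show ?thesis
        using a[OF that] by simp
    qed
    ultimately have "((\<lambda>i. (\<sigma> i)\<^sup>2 * inner x (u i) * inner z (u i))
        has_sum inner (A w) (A z) + \<alpha> * inner w z) I"
      by (rule has_sum_cong[THEN iffD1, rotated])
    then have "inner (A w) (A z) + \<alpha> * inner w z = inner (A x) (A z)"
      using singular_system_has_sum_inner_apply[OF adj sys] by (rule has_sum_unique)
    then show ?thesis
      by (simp add: is_adjoint_inner_left[OF adj] inner_add_left)
  qed
  then show ?thesis
    using vector_eq_rdot by blast
qed

lemma tikhonov_has_sum_expansion:
  fixes A :: "'a::{real_inner,complete_space} \<Rightarrow> 'b::real_inner"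
  assumes "linear A" and adj: "is_adjoint A As" and sys: "singular_system A As I \<sigma> u v"
    and "\<alpha> > 0"
  shows "((\<lambda>i. ((\<sigma> i)\<^sup>2 / ((\<sigma> i)\<^sup>2 + \<alpha>) * inner x (u i)) *\<^sub>R u i)
           has_sum tikhonov A As (A x) \<alpha>) I"
proof -
  define a where "a i = (\<sigma> i)\<^sup>2 / ((\<sigma> i)\<^sup>2 + \<alpha>) * inner x (u i)" for i
  have ON: "orthonormal_on I u"
    using sys unfolding singular_system_def by blast
  have pos: "0 < (\<sigma> i)\<^sup>2 + \<alpha>" for i
    using \<open>\<alpha> > 0\<close> by (simp add: add_nonneg_pos)
  have "(a i)\<^sup>2 \<le> (inner x (u i))\<^sup>2" for i
  proof -
    have "(\<sigma> i)\<^sup>2 / ((\<sigma> i)\<^sup>2 + \<alpha>) \<le> 1"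
      using pos[of i] \<open>\<alpha> > 0\<close> by simp
    then show ?thesis
      unfolding a_def power_mult_distrib using pos[of i]
      by (intro mult_left_le_one_le power_le_one) auto
  qed
  then have "(\<lambda>i. (a i)\<^sup>2) summable_on I"
    by (intro summable_on_comparison_test[OF orthonormal_on_Bessel[OF ON, of x]]) auto
  then obtain w where w: "((\<lambda>i. a i *\<^sub>R u i) has_sum w) I"
    using orthonormal_on_summable_on_scaleR[OF ON] unfolding summable_on_def by blast
  have "((\<sigma> i)\<^sup>2 + \<alpha>) * a i = (\<sigma> i)\<^sup>2 * inner x (u i)" for i
    using pos[of i] by (simp add: a_def)
  then have "As (A w) + \<alpha> *\<^sub>R w = As (A x)"
    by (intro singular_system_normal_equation[OF adj sys w])
  then have "tikhonov A As (A x) \<alpha> = w"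
    by (rule tikhonov_eqI[OF \<open>linear A\<close> adj \<open>\<alpha> > 0\<close>])
  with w show ?thesis
    by (simp add: a_def)
qed

lemma tikhonov_error_has_sum:
  fixes A :: "'a::{real_inner,complete_space} \<Rightarrow> 'b::real_inner"
  assumes "bounded_linear A" and adj: "is_adjoint A As" and sys: "singular_system A As I \<sigma> u v"
    and perp: "\<forall>z. A z = 0 \<longrightarrow> inner x z = 0" and "\<alpha> > 0"
  shows "((\<lambda>i. (\<alpha> / ((\<sigma> i)\<^sup>2 + \<alpha>))\<^sup>2 * (inner x (u i))\<^sup>2)
           has_sum (norm (tikhonov A As (A x) \<alpha> - x))\<^sup>2) I"
proof -
  have ON: "orthonormal_on I u"
    using sys unfolding singular_system_def by blast
  have "((\<lambda>i. ((\<sigma> i)\<^sup>2 / ((\<sigma> i)\<^sup>2 + \<alpha>) * inner x (u i)) *\<^sub>R u i + - (inner x (u i) *\<^sub>R u i))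
      has_sum tikhonov A As (A x) \<alpha> + - x) I"
  proof (rule has_sum_add)
    show "((\<lambda>i. ((\<sigma> i)\<^sup>2 / ((\<sigma> i)\<^sup>2 + \<alpha>) * inner x (u i)) *\<^sub>R u i)
        has_sum tikhonov A As (A x) \<alpha>) I"
      by (rule tikhonov_has_sum_expansion[OF bounded_linear.linear[OF assms(1)] adj sys \<open>\<alpha> > 0\<close>])
    show "((\<lambda>i. - (inner x (u i) *\<^sub>R u i)) has_sum - x) I"
      using singular_system_has_sum_expansion[OF assms(1) sys perp] by (simp add: has_sum_uminus)
  qed
  moreover have "((\<sigma> i)\<^sup>2 / ((\<sigma> i)\<^sup>2 + \<alpha>) * inner x (u i)) *\<^sub>R u i + - (inner x (u i) *\<^sub>R u i)
      = (- (\<alpha> / ((\<sigma> i)\<^sup>2 + \<alpha>) * inner x (u i))) *\<^sub>R u i" for i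
  proof -
    have "(\<sigma> i)\<^sup>2 + \<alpha> > 0"
      using \<open>\<alpha> > 0\<close> by (simp add: add_nonneg_pos)
    then have "(\<sigma> i)\<^sup>2 / ((\<sigma> i)\<^sup>2 + \<alpha>) * inner x (u i) - inner x (u i)
        = - (\<alpha> / ((\<sigma> i)\<^sup>2 + \<alpha>) * inner x (u i))"
      by (simp add: field_simps)
    moreover have "((\<sigma> i)\<^sup>2 / ((\<sigma> i)\<^sup>2 + \<alpha>) * inner x (u i)) *\<^sub>R u i + - (inner x (u i) *\<^sub>R u i)
        = ((\<sigma> i)\<^sup>2 / ((\<sigma> i)\<^sup>2 + \<alpha>) * inner x (u i) - inner x (u i)) *\<^sub>R u i"
      by (simp add: scaleR_diff_left)
    ultimately show ?thesis
      by simp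
  qed
  ultimately have "((\<lambda>i. (- (\<alpha> / ((\<sigma> i)\<^sup>2 + \<alpha>) * inner x (u i))) *\<^sub>R u i)
      has_sum tikhonov A As (A x) \<alpha> - x) I"
    by simp
  from orthonormal_on_has_sum_norm_squared[OF ON this] show ?thesis
    by (simp only: power2_minus power_mult_distrib)
qed

lemma residual_factor_le_one:
  fixes \<alpha> l :: real
  assumes "0 < \<alpha>" "0 \<le> l"
  shows "(\<alpha> / (l + \<alpha>))\<^sup>2 \<le> 1"
  using assms by (intro power_le_one) auto

lemma psi_factor_le_one:
  fixes \<alpha> l :: real
  assumes "0 < \<alpha>" "0 < l"
  shows "\<alpha> * l\<^sup>2 / (l + \<alpha>) ^ 3 \<le> 1"
proof -
  have "\<alpha> * l\<^sup>2 \<le> (l + \<alpha>) * (l + \<alpha>)\<^sup>2"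
    using assms by (intro mult_mono power_mono) auto
  then show ?thesis
    using assms by (simp add: power2_eq_square power3_eq_cube)
qed

lemma psi_term_bounds:
  fixes \<alpha> l c :: real
  assumes "0 < \<alpha>" "0 < l" "0 \<le> c"
  shows "0 \<le> \<alpha> * l\<^sup>2 / (l + \<alpha>) ^ 3 * c" and "\<alpha> * l\<^sup>2 / (l + \<alpha>) ^ 3 * c \<le> c"
proof -
  have f: "0 \<le> \<alpha> * l\<^sup>2 / (l + \<alpha>) ^ 3" "\<alpha> * l\<^sup>2 / (l + \<alpha>) ^ 3 \<le> 1"
    using assms psi_factor_le_one[of \<alpha> l] by auto
  show "0 \<le> \<alpha> * l\<^sup>2 / (l + \<alpha>) ^ 3 * c"
    using f(1) \<open>0 \<le> c\<close> by (rule mult_nonneg_nonneg)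
  show "\<alpha> * l\<^sup>2 / (l + \<alpha>) ^ 3 * c \<le> c"
    using \<open>0 \<le> c\<close> f by (rule mult_left_le_one_le)
qed

lemma residual_factor_le_psi_factor:
  fixes \<alpha> l :: real
  assumes "0 < \<alpha>" "\<alpha> \<le> l"
  shows "(\<alpha> / (l + \<alpha>))\<^sup>2 \<le> 8 * (\<alpha> * l\<^sup>2 / (l + \<alpha>) ^ 3)"
proof -
  have "\<alpha> * (l + \<alpha>) \<le> l * (2 * l)"
    using assms by (intro mult_mono) auto
  also have "\<dots> \<le> 8 * l\<^sup>2"
    by (simp add: power2_eq_square)
  finally have "\<alpha> * (\<alpha> * (l + \<alpha>)) \<le> \<alpha> * (8 * l\<^sup>2)"
    using assms by (intro mult_left_mono) auto
  then have "\<alpha> * (\<alpha> * (l + \<alpha>)) / (l + \<alpha>) ^ 3 \<le> \<alpha> * (8 * l\<^sup>2) / (l + \<alpha>) ^ 3"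
    by (rule divide_right_mono) (use assms in simp)
  moreover have "(\<alpha> / (l + \<alpha>))\<^sup>2 = \<alpha> * (\<alpha> * (l + \<alpha>)) / (l + \<alpha>) ^ 3"
    using assms by (simp add: divide_simps power2_eq_square power3_eq_cube)
  ultimately show ?thesis
    by (simp add: mult.left_commute)
qed

lemma source_factor_le_psi_factor:
  fixes \<alpha> l :: real
  assumes "0 < \<alpha>" "\<alpha> \<le> l"
  shows "\<alpha> / l \<le> 8 * (\<alpha> * l\<^sup>2 / (l + \<alpha>) ^ 3)"
proof -
  have "(l + \<alpha>) ^ 3 \<le> 8 * l ^ 3"
    using power_mono[of "l + \<alpha>" "2 * l" 3] assms by simp
  then have "\<alpha> * l\<^sup>2 / (8 * l ^ 3) \<le> \<alpha> * l\<^sup>2 / (l + \<alpha>) ^ 3"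
    using assms by (intro frac_le) auto
  moreover have "\<alpha> * l\<^sup>2 / (8 * l ^ 3) = \<alpha> / l / 8"
    using assms by (simp add: field_simps power2_eq_square power3_eq_cube)
  ultimately show ?thesis
    by simp
qed

lemma psi_terms_summable_on:
  fixes l c :: "'i \<Rightarrow> real" and \<alpha> :: real
  assumes l: "\<And>i. i \<in> I \<Longrightarrow> 0 < l i" and c: "\<And>i. i \<in> I \<Longrightarrow> 0 \<le> c i"
    and c_sum: "c summable_on I" and "0 < \<alpha>"
  shows "(\<lambda>i. \<alpha> * (l i)\<^sup>2 / (l i + \<alpha>) ^ 3 * c i) summable_on I"
proof (rule summable_on_comparison_test[OF c_sum])
  fix i
  assume "i \<in> I"
  show "\<alpha> * (l i)\<^sup>2 / (l i + \<alpha>) ^ 3 * c i \<le> c i"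
    using \<open>0 < \<alpha>\<close> l[OF \<open>i \<in> I\<close>] c[OF \<open>i \<in> I\<close>] by (rule psi_term_bounds(2))
  show "0 \<le> \<alpha> * (l i)\<^sup>2 / (l i + \<alpha>) ^ 3 * c i"
    using \<open>0 < \<alpha>\<close> l[OF \<open>i \<in> I\<close>] c[OF \<open>i \<in> I\<close>] by (rule psi_term_bounds(1))
qed

lemma tikhonov_residual_infsum_split:
  fixes l c :: "'i \<Rightarrow> real" and \<alpha> :: real
  assumes l: "\<And>i. i \<in> I \<Longrightarrow> 0 < l i" and c: "\<And>i. i \<in> I \<Longrightarrow> 0 \<le> c i"
    and c_sum: "c summable_on I" and "0 < \<alpha>"
  shows "(\<Sum>\<^sub>\<infinity>i\<in>I. (\<alpha> / (l i + \<alpha>))\<^sup>2 * c i)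
           \<le> (\<Sum>\<^sub>\<infinity>i\<in>{i\<in>I. l i \<le> \<alpha>}. c i)
             + 8 * (\<Sum>\<^sub>\<infinity>i\<in>{i\<in>I. \<alpha> \<le> l i}. \<alpha> * (l i)\<^sup>2 / (l i + \<alpha>) ^ 3 * c i)"
proof -
  define e where "e i = (\<alpha> / (l i + \<alpha>))\<^sup>2 * c i" for i
  define p where "p i = \<alpha> * (l i)\<^sup>2 / (l i + \<alpha>) ^ 3 * c i" for i
  define L where "L = {i\<in>I. l i < \<alpha>}"
  define G where "G = {i\<in>I. \<alpha> \<le> l i}"
  have LG: "I = L \<union> G" "L \<inter> G = {}" "L \<subseteq> I" "G \<subseteq> I"
    unfolding L_def G_def by auto
  have e_le: "0 \<le> e i" "e i \<le> c i" if "i \<in> I" for i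
    using c[OF that] residual_factor_le_one[OF \<open>0 < \<alpha>\<close> less_imp_le[OF l[OF that]]]
    unfolding e_def by (auto intro: mult_left_le_one_le)
  have eG_le: "e i \<le> 8 * p i" if "i \<in> G" for i
  proof -
    have "i \<in> I" "\<alpha> \<le> l i"
      using that by (auto simp: G_def)
    have "(\<alpha> / (l i + \<alpha>))\<^sup>2 \<le> 8 * (\<alpha> * (l i)\<^sup>2 / (l i + \<alpha>) ^ 3)"
      using \<open>0 < \<alpha>\<close> \<open>\<alpha> \<le> l i\<close> by (rule residual_factor_le_psi_factor)
    then have "(\<alpha> / (l i + \<alpha>))\<^sup>2 * c i \<le> 8 * (\<alpha> * (l i)\<^sup>2 / (l i + \<alpha>) ^ 3) * c i"
      using c[OF \<open>i \<in> I\<close>] by (rule mult_right_mono)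
    then show ?thesis
      unfolding e_def p_def by (simp only: mult.assoc)
  qed
  have e_sum: "e summable_on I"
    using summable_on_comparison_test[OF c_sum] e_le by blast
  have "p summable_on I"
    unfolding p_def by (rule psi_terms_summable_on[OF l c c_sum \<open>0 < \<alpha>\<close>])
  then have "p summable_on G"
    using LG(4) by (rule summable_on_subset_banach)
  then have p_sum_G: "(\<lambda>i. 8 * p i) summable_on G"
    by (rule summable_on_cmult_right)
  have "infsum e I = infsum e L + infsum e G"
    using LG by (simp add: infsum_Un_disjoint summable_on_subset_banach[OF e_sum])
  moreover have "infsum e L \<le> (\<Sum>\<^sub>\<infinity>i\<in>{i\<in>I. l i \<le> \<alpha>}. c i)"
    using LG e_le c by (intro infsum_mono_neutral summable_on_subset_banach[OF e_sum]
        summable_on_subset_banach[OF c_sum]) (auto simp: L_def)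
  moreover have "infsum e G \<le> (\<Sum>\<^sub>\<infinity>i\<in>G. 8 * p i)"
    using LG by (intro infsum_mono[OF _ p_sum_G eG_le] summable_on_subset_banach[OF e_sum])
  moreover have "(\<Sum>\<^sub>\<infinity>i\<in>G. 8 * p i) = 8 * infsum p G"
    by (rule infsum_cmult_right')
  ultimately have "infsum e I \<le> (\<Sum>\<^sub>\<infinity>i\<in>{i\<in>I. l i \<le> \<alpha>}. c i) + 8 * infsum p G"
    by linarith
  then show ?thesis
    unfolding e_def p_def G_def .
qed

lemma source_infsum_le_psi_infsum:
  fixes l c :: "'i \<Rightarrow> real" and \<alpha> :: real
  assumes l: "\<And>i. i \<in> I \<Longrightarrow> 0 < l i" and c: "\<And>i. i \<in> I \<Longrightarrow> 0 \<le> c i"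
    and c_sum: "c summable_on I" and "0 < \<alpha>"
  shows "(\<Sum>\<^sub>\<infinity>i\<in>{i\<in>I. \<alpha> \<le> l i}. \<alpha> / l i * c i)
           \<le> 8 * (\<Sum>\<^sub>\<infinity>i\<in>{i\<in>I. \<alpha> \<le> l i}. \<alpha> * (l i)\<^sup>2 / (l i + \<alpha>) ^ 3 * c i)"
proof -
  define p where "p i = \<alpha> * (l i)\<^sup>2 / (l i + \<alpha>) ^ 3 * c i" for i
  define q where "q i = \<alpha> / l i * c i" for i
  define G where "G = {i\<in>I. \<alpha> \<le> l i}"
  have q_le: "q i \<le> 8 * p i" if "i \<in> G" for i
  proof -
    have "i \<in> I" "\<alpha> \<le> l i"
      using that by (auto simp: G_def)
    have "\<alpha> / l i \<le> 8 * (\<alpha> * (l i)\<^sup>2 / (l i + \<alpha>) ^ 3)"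
      using \<open>0 < \<alpha>\<close> \<open>\<alpha> \<le> l i\<close> by (rule source_factor_le_psi_factor)
    then have "\<alpha> / l i * c i \<le> 8 * (\<alpha> * (l i)\<^sup>2 / (l i + \<alpha>) ^ 3) * c i"
      using c[OF \<open>i \<in> I\<close>] by (rule mult_right_mono)
    then show ?thesis
      unfolding q_def p_def by (simp only: mult.assoc)
  qed
  have "p summable_on I"
    unfolding p_def by (rule psi_terms_summable_on[OF l c c_sum \<open>0 < \<alpha>\<close>])
  then have "p summable_on G"
    by (rule summable_on_subset_banach) (auto simp: G_def)
  then have p_sum_G: "(\<lambda>i. 8 * p i) summable_on G"
    by (rule summable_on_cmult_right)
  have "0 \<le> q i" if "i \<in> G" for i
    using that l c \<open>0 < \<alpha>\<close> by (auto simp: q_def G_def)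
  then have "q summable_on G"
    by (intro summable_on_comparison_test[OF p_sum_G]) (simp_all add: q_le)
  then have "infsum q G \<le> (\<Sum>\<^sub>\<infinity>i\<in>G. 8 * p i)"
    by (rule infsum_mono[OF _ p_sum_G q_le])
  then have "infsum q G \<le> 8 * infsum p G"
    by (simp only: infsum_cmult_right')
  then show ?thesis
    unfolding p_def q_def G_def .
qed

lemma tikhonov_residual_infsum_le:
  fixes l c :: "'i \<Rightarrow> real" and \<alpha> D :: real
  assumes l: "\<And>i. i \<in> I \<Longrightarrow> 0 < l i" and c: "\<And>i. i \<in> I \<Longrightarrow> 0 \<le> c i"
    and c_sum: "c summable_on I" and "0 < \<alpha>" and "0 \<le> D"
    and balance: "(\<Sum>\<^sub>\<infinity>i\<in>{i\<in>I. l i \<le> \<alpha>}. c i) \<le> D * (\<Sum>\<^sub>\<infinity>i\<in>{i\<in>I. \<alpha> \<le> l i}. \<alpha> / l i * c i)"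
  shows "(\<Sum>\<^sub>\<infinity>i\<in>I. (\<alpha> / (l i + \<alpha>))\<^sup>2 * c i)
           \<le> 8 * (D + 1) * (\<Sum>\<^sub>\<infinity>i\<in>I. \<alpha> * (l i)\<^sup>2 / (l i + \<alpha>) ^ 3 * c i)"
proof -
  define p where "p i = \<alpha> * (l i)\<^sup>2 / (l i + \<alpha>) ^ 3 * c i" for i
  define G where "G = {i\<in>I. \<alpha> \<le> l i}"
  have p_nonneg: "0 \<le> p i" if "i \<in> I" for i
    unfolding p_def using \<open>0 < \<alpha>\<close> l[OF that] c[OF that] by (rule psi_term_bounds(1))
  have p_sum: "p summable_on I"
    unfolding p_def by (rule psi_terms_summable_on[OF l c c_sum \<open>0 < \<alpha>\<close>])
  have pGI: "infsum p G \<le> infsum p I"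
    using p_nonneg
    by (intro infsum_mono2 summable_on_subset_banach[OF p_sum] p_sum) (auto simp: G_def)
  have split: "(\<Sum>\<^sub>\<infinity>i\<in>I. (\<alpha> / (l i + \<alpha>))\<^sup>2 * c i)
      \<le> (\<Sum>\<^sub>\<infinity>i\<in>{i\<in>I. l i \<le> \<alpha>}. c i) + 8 * infsum p G"
    using tikhonov_residual_infsum_split[of I l c \<alpha>, OF l c c_sum \<open>0 < \<alpha>\<close>]
    unfolding p_def G_def .
  have "(\<Sum>\<^sub>\<infinity>i\<in>{i\<in>I. \<alpha> \<le> l i}. \<alpha> / l i * c i) \<le> 8 * infsum p G"
    using source_infsum_le_psi_infsum[of I l c \<alpha>, OF l c c_sum \<open>0 < \<alpha>\<close>]
    unfolding p_def G_def .
  then have "(\<Sum>\<^sub>\<infinity>i\<in>{i\<in>I. l i \<le> \<alpha>}. c i) \<le> D * (8 * infsum p G)"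
    using balance \<open>0 \<le> D\<close> by (meson mult_left_mono order_trans)
  then have "(\<Sum>\<^sub>\<infinity>i\<in>I. (\<alpha> / (l i + \<alpha>))\<^sup>2 * c i) \<le> 8 * (D + 1) * infsum p G"
    using split by (simp add: algebra_simps)
  also have "\<dots> \<le> 8 * (D + 1) * infsum p I"
    using pGI \<open>0 \<le> D\<close> by (intro mult_left_mono) auto
  finally show ?thesis
    unfolding p_def .
qed

theorem mainTheorem6:
  fixes A :: "'a::{real_inner,complete_space} \<Rightarrow> 'b::{real_inner,complete_space}"
    and As :: "'b \<Rightarrow> 'a"
    and I :: "nat set" and \<sigma> :: "nat \<Rightarrow> real" and u :: "nat \<Rightarrow> 'a" and v :: "nat \<Rightarrow> 'b"
    and xd :: 'a and \<alpha>max D :: real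
  assumes "compact_operator A"
    and "is_adjoint A As"
    and "singular_system A As I \<sigma> u v"
    and "\<forall>z. A z = 0 \<longrightarrow> inner xd z = 0"
    and "\<alpha>max > 0"
    and "D > 0"
    and "\<forall>\<alpha>. 0 < \<alpha> \<and> \<alpha> < \<alpha>max \<longrightarrow>
           (\<Sum>\<^sub>\<infinity>i\<in>{i\<in>I. (\<sigma> i)\<^sup>2 \<le> \<alpha>}. \<bar>inner xd (u i)\<bar>\<^sup>2)
           \<le> D * (\<Sum>\<^sub>\<infinity>i\<in>{i\<in>I. (\<sigma> i)\<^sup>2 \<ge> \<alpha>}. \<alpha> / (\<sigma> i)\<^sup>2 * \<bar>inner xd (u i)\<bar>\<^sup>2)"
  shows "\<forall>\<alpha>. 0 < \<alpha> \<and> \<alpha> < \<alpha>max \<longrightarrow>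
           norm (tikhonov A As (A xd) \<alpha> - xd) \<le> sqrt (8 * (D + 1)) * psi_SL I \<sigma> u \<alpha> xd"
proof (intro allI impI)
  fix \<alpha>
  assume \<alpha>: "0 < \<alpha> \<and> \<alpha> < \<alpha>max"
  \<comment> \<open>Compactness is only needed for the existence of the singular system, which is assumed.\<close>
  have "bounded_linear A"
    using assms(1) unfolding compact_operator_def by blast
  have ON: "orthonormal_on I u" and \<sigma>: "\<And>i. i \<in> I \<Longrightarrow> 0 < (\<sigma> i)\<^sup>2"
    using assms(3) unfolding singular_system_def by auto
  have err: "((\<lambda>i. (\<alpha> / ((\<sigma> i)\<^sup>2 + \<alpha>))\<^sup>2 * \<bar>inner xd (u i)\<bar>\<^sup>2)
      has_sum (norm (tikhonov A As (A xd) \<alpha> - xd))\<^sup>2) I"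
    using tikhonov_error_has_sum[OF \<open>bounded_linear A\<close> assms(2-4)] \<alpha> by simp
  have balance: "(\<Sum>\<^sub>\<infinity>i\<in>{i\<in>I. (\<sigma> i)\<^sup>2 \<le> \<alpha>}. \<bar>inner xd (u i)\<bar>\<^sup>2)
      \<le> D * (\<Sum>\<^sub>\<infinity>i\<in>{i\<in>I. (\<sigma> i)\<^sup>2 \<ge> \<alpha>}. \<alpha> / (\<sigma> i)\<^sup>2 * \<bar>inner xd (u i)\<bar>\<^sup>2)"
    using assms(7) \<alpha> by blast
  have "(\<lambda>i. \<bar>inner xd (u i)\<bar>\<^sup>2) summable_on I"
    using orthonormal_on_Bessel[OF ON, of xd] by simp
  then have "(\<Sum>\<^sub>\<infinity>i\<in>I. (\<alpha> / ((\<sigma> i)\<^sup>2 + \<alpha>))\<^sup>2 * \<bar>inner xd (u i)\<bar>\<^sup>2)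
      \<le> 8 * (D + 1) * (\<Sum>\<^sub>\<infinity>i\<in>I. \<alpha> * (\<sigma> i)\<^sup>2 ^ 2 / ((\<sigma> i)\<^sup>2 + \<alpha>) ^ 3 * \<bar>inner xd (u i)\<bar>\<^sup>2)"
    using \<alpha> assms(6) by (intro tikhonov_residual_infsum_le[OF \<sigma> _ _ _ _ balance]) auto
  then have "(norm (tikhonov A As (A xd) \<alpha> - xd))\<^sup>2
      \<le> 8 * (D + 1) * (\<Sum>\<^sub>\<infinity>i\<in>I. \<alpha> * (\<sigma> i)\<^sup>2 ^ 2 / ((\<sigma> i)\<^sup>2 + \<alpha>) ^ 3 * \<bar>inner xd (u i)\<bar>\<^sup>2)"
    by (simp only: infsumI[OF err])
  then show "norm (tikhonov A As (A xd) \<alpha> - xd) \<le> sqrt (8 * (D + 1)) * psi_SL I \<sigma> u \<alpha> xd"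
    unfolding psi_SL_def by (simp add: real_le_rsqrt flip: real_sqrt_mult)
qed

end
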